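(* Assume that $\theta_n>0$ for all $n$ and that \[ \lim_{n\to\infty}\sum_{j=1}^{n-1}\frac{\theta_j\theta_{n-j}}{\theta_n}=0. \] Then $\lim_{n\to\infty}\mathbb{P}_n(L_1=n)=1$. Consequently $\mathbb{P}_n(K=1)\to1$ and $\mathbb{P}_n(R_j=0)\to1$ for every fixed $j$.
   Context: For $\sigma\in\mathcal{S}_n$ (permutations of $\{1,\dots,n\}$), $R_j(\sigma)$ is the number of cycles of length $j$, $L_1(\sigma)$ the length of the cycle containing $1$, and $K(\sigma)=\sum_jR_j(\sigma)$ the number of cycles. Given parameters $\theta_j\ge0$, $h_0=1$, $h_n=\frac1{n!}\sum_{\sigma\in\mathcal{S}_n}\prod_{j}\theta_j^{R_j(\sigma)}$, and $\mathbb{P}_n(\sigma)=\frac1{n!h_n}\prod_j\theta_j^{R_j(\sigma)}$. *)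

theory Defs
  imports "HOL-Analysis.Analysis" "HOL-Combinatorics.Permutations"
begin

definition perms :: "nat \<Rightarrow> (nat \<Rightarrow> nat) set" where
  "perms n = {\<sigma>. \<sigma> permutes {1..n}}"

definition cycle_of :: "(nat \<Rightarrow> nat) \<Rightarrow> nat \<Rightarrow> nat set" where
  "cycle_of \<sigma> x = {(\<sigma> ^^ k) x | k. True}"

definition cycles_of :: "nat \<Rightarrow> (nat \<Rightarrow> nat) \<Rightarrow> nat set set" where
  "cycles_of n \<sigma> = cycle_of \<sigma> ` {1..n}"

definition R :: "nat \<Rightarrow> nat \<Rightarrow> (nat \<Rightarrow> nat) \<Rightarrow> nat" where
  "R n j \<sigma> = card {C \<in> cycles_of n \<sigma>. card C = j}"

definition K :: "nat \<Rightarrow> (nat \<Rightarrow> nat) \<Rightarrow> nat" where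
  "K n \<sigma> = card (cycles_of n \<sigma>)"

definition L1 :: "(nat \<Rightarrow> nat) \<Rightarrow> nat" where
  "L1 \<sigma> = card (cycle_of \<sigma> 1)"

text \<open>Weight prod_j theta_j^(R_j sigma); only j in {1..n} can have R_j > 0.\<close>
definition weight :: "(nat \<Rightarrow> real) \<Rightarrow> nat \<Rightarrow> (nat \<Rightarrow> nat) \<Rightarrow> real" where
  "weight \<theta> n \<sigma> = (\<Prod>j\<in>{1..n}. \<theta> j ^ R n j \<sigma>)"

definition h :: "(nat \<Rightarrow> real) \<Rightarrow> nat \<Rightarrow> real" where
  "h \<theta> n = (\<Sum>\<sigma>\<in>perms n. weight \<theta> n \<sigma>) / fact n"

definition Pn :: "(nat \<Rightarrow> real) \<Rightarrow> nat \<Rightarrow> (nat \<Rightarrow> nat) \<Rightarrow> real" where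
  "Pn \<theta> n \<sigma> = weight \<theta> n \<sigma> / (fact n * h \<theta> n)"

definition Prob :: "(nat \<Rightarrow> real) \<Rightarrow> nat \<Rightarrow> ((nat \<Rightarrow> nat) \<Rightarrow> bool) \<Rightarrow> real" where
  "Prob \<theta> n E = (\<Sum>\<sigma>\<in>{\<sigma>\<in>perms n. E \<sigma>}. Pn \<theta> n \<sigma>)"

end

theory Submission
  imports Defs "HOL-Combinatorics.Combinatorics"
begin

(* Proof idea.  Write c(n) = h(n)/theta(n).  The whole argument rests on the
   "first cycle" recursion

       n h(n) = sum_{k=1..n} theta(k) h(n-k),

   obtained by grouping the permutations of a finite set S according to the
   cycle A containing a fixed point a: there are (|A|-1)! cyclic orderings of A,
   and the rest of the permutation is an arbitrary permutation of S - A.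
   Dividing by theta(n) turns the recursion into
       n c(n) = 1 + sum_{j=1..n-1} theta(j) theta(n-j)/theta(n) * c(n-j),
   and a purely analytic "renewal" lemma shows that n c(n) -> 1 whenever the
   coefficient sums tend to 0.  Finally P_n(L_1 = n) = theta(n)/(n h(n)) =
   1/(n c(n)), because the n-cycles are exactly the permutations with L_1 = n
   and there are (n-1)! of them; a single n-cycle also has K = 1 and R_j = 0
   for j <> n, which gives the two consequences. *)

section \<open>Cycles of a permutation\<close>

lemma funpow_agree:
  assumes "x \<in> A" "\<And>y. y \<in> A \<Longrightarrow> f y \<in> A" "\<And>y. y \<in> A \<Longrightarrow> f y = g y"
  shows "(f ^^ k) x = (g ^^ k) x \<and> (f ^^ k) x \<in> A"
  using assms by (induction k) auto

lemma cycle_of_agree: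
  assumes "x \<in> A" "\<And>y. y \<in> A \<Longrightarrow> f y \<in> A" "\<And>y. y \<in> A \<Longrightarrow> f y = g y"
  shows "cycle_of f x = cycle_of g x"
  using funpow_agree[OF assms] unfolding cycle_of_def by auto

lemma cycle_of_orbit:
  assumes "permutation \<sigma>"
  shows "cycle_of \<sigma> x = orbit \<sigma> x"
  unfolding cycle_of_def orbit_altdef_permutation[OF assms] by simp

lemma cycle_of_self: "x \<in> cycle_of \<sigma> x"
  unfolding cycle_of_def by (auto intro: exI[of _ 0])

lemma cycle_of_sub:
  assumes "\<sigma> permutes S" "x \<in> S"
  shows "cycle_of \<sigma> x \<subseteq> S"
  unfolding cycle_of_def using permutes_in_funpow_image[OF assms] by auto

lemma cycle_of_card:
  assumes "\<sigma> permutes S" "finite S" "x \<in> S"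
  shows "1 \<le> card (cycle_of \<sigma> x)" "card (cycle_of \<sigma> x) \<le> card S"
proof -
  have "finite (cycle_of \<sigma> x)"
    using cycle_of_sub[OF assms(1,3)] assms(2) finite_subset by blast
  then show "1 \<le> card (cycle_of \<sigma> x)"
    using cycle_of_self[of x \<sigma>] by (metis One_nat_def Suc_leI card_gt_0_iff empty_iff)
  show "card (cycle_of \<sigma> x) \<le> card S"
    using cycle_of_sub[OF assms(1,3)] assms(2) card_mono by blast
qed

lemma cyclic_on_cycle_of:
  assumes "\<sigma> permutes S" "finite S"
  shows "cyclic_on \<sigma> (cycle_of \<sigma> x)"
  using cyclic_on_orbit[OF assms] cycle_of_orbit permutes_imp_permutation[OF assms(2,1)] by metis

lemma cycle_of_same:
  assumes "\<sigma> permutes S" "finite S" "y \<in> cycle_of \<sigma> x"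
  shows "cycle_of \<sigma> y = cycle_of \<sigma> x"
  using orbit_cyclic_eq3[OF cyclic_on_cycle_of[OF assms(1,2)] assms(3)]
    cycle_of_orbit permutes_imp_permutation[OF assms(2,1)] by metis

section \<open>Cyclic permutations of a set\<close>

definition cyc :: "nat set \<Rightarrow> nat \<Rightarrow> (nat \<Rightarrow> nat) set" where
  "cyc A a = {\<sigma>. \<sigma> permutes A \<and> cycle_of \<sigma> a = A}"

text \<open>Their list presentations: the enumerations of \<open>A\<close> starting at \<open>a\<close>.\<close>
definition cyclists :: "nat set \<Rightarrow> nat \<Rightarrow> nat list set" where
  "cyclists A a = {xs. set xs = A \<and> distinct xs \<and> hd xs = a}"

lemma cyclists_eq:
  assumes "a \<in> A"
  shows "cyclists A a = (#) a ` permutations_of_set (A - {a})"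
proof (rule set_eqI, rule iffI)
  fix xs assume "xs \<in> cyclists A a"
  then have x: "set xs = A" "distinct xs" "hd xs = a" unfolding cyclists_def by auto
  then have ne: "xs \<noteq> []" using assms by auto
  then obtain ys where ys: "xs = a # ys" using x(3) by (cases xs) auto
  have "a \<notin> set ys" "distinct ys" using x(2) ys by simp_all
  moreover have "set ys = A - {a}" using x(1) ys \<open>a \<notin> set ys\<close> by auto
  ultimately have "ys \<in> permutations_of_set (A - {a})" unfolding permutations_of_set_def by simp
  then show "xs \<in> (#) a ` permutations_of_set (A - {a})" using ys by blast
next
  fix xs assume "xs \<in> (#) a ` permutations_of_set (A - {a})"
  then obtain ys where ys: "xs = a # ys" "set ys = A - {a}" "distinct ys"
    unfolding permutations_of_set_def by blast
  have "set xs = A" using ys(1,2) assms by auto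
  moreover have "distinct xs" using ys by simp
  moreover have "hd xs = a" using ys by simp
  ultimately show "xs \<in> cyclists A a" unfolding cyclists_def by simp
qed

lemma card_cyclists:
  assumes "finite A" "a \<in> A"
  shows "finite (cyclists A a)" "card (cyclists A a) = fact (card A - 1)"
proof -
  have inj: "inj_on ((#) a) (permutations_of_set (A - {a}))" by (simp add: inj_on_def)
  show "finite (cyclists A a)" unfolding cyclists_eq[OF assms(2)] using assms(1) by simp
  have "card (cyclists A a) = card (permutations_of_set (A - {a}))"
    unfolding cyclists_eq[OF assms(2)] using card_image[OF inj] .
  also have "\<dots> = fact (card (A - {a}))"
    using assms(1) by (simp only: card_permutations_of_set finite_Diff)
  also have "card (A - {a}) = card A - 1" using assms by simp
  finally show "card (cyclists A a) = fact (card A - 1)" .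
qed

lemma cycle_of_list_pow:
  assumes "distinct xs" "xs \<noteq> []"
  shows "((cycle_of_list xs) ^^ n) (xs ! 0) = xs ! (n mod length xs)"
proof -
  have "map ((cycle_of_list xs) ^^ n) xs = rotate n xs" by (rule cyclic_rotation[OF assms(1)])
  then have "((cycle_of_list xs) ^^ n) (xs ! 0) = rotate n xs ! 0"
    by (metis assms(2) length_greater_0_conv nth_map)
  also have "\<dots> = xs ! (n mod length xs)" using assms(2) by (simp add: nth_rotate)
  finally show ?thesis .
qed

lemma cycle_of_list_cycle:
  assumes "distinct xs" "xs \<noteq> []"
  shows "cycle_of (cycle_of_list xs) (hd xs) = set xs"
proof -
  have "cycle_of (cycle_of_list xs) (hd xs) = {xs ! (n mod length xs) | n. True}"
    unfolding cycle_of_def hd_conv_nth[OF assms(2)] cycle_of_list_pow[OF assms] by simp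
  also have "\<dots> = set xs"
  proof (rule set_eqI, rule iffI)
    fix y assume "y \<in> {xs ! (n mod length xs) | n. True}"
    then show "y \<in> set xs" using assms(2) by auto
  next
    fix y assume "y \<in> set xs"
    then obtain i where "i < length xs" "y = xs ! (i mod length xs)" by (metis in_set_conv_nth mod_less)
    then show "y \<in> {xs ! (n mod length xs) | n. True}" by blast
  qed
  finally show ?thesis .
qed

lemma card_cyclists_le_cyc:
  assumes "finite A" "a \<in> A"
  shows "card (cyclists A a) \<le> card (cyc A a)"
proof (rule card_inj_on_le[where f = cycle_of_list])
  show "inj_on cycle_of_list (cyclists A a)"
  proof (rule inj_onI)
    fix xs ys assume xs: "xs \<in> cyclists A a" and ys: "ys \<in> cyclists A a"
      and eq: "cycle_of_list xs = cycle_of_list ys"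
    have x: "set xs = A" "distinct xs" "hd xs = a" and y: "set ys = A" "distinct ys" "hd ys = a"
      using xs ys unfolding cyclists_def by auto
    have ne: "xs \<noteq> []" "ys \<noteq> []" using x y assms by auto
    have len: "length xs = length ys" using x y by (metis distinct_card)
    have h0: "xs ! 0 = ys ! 0" using x y ne by (simp add: hd_conv_nth)
    show "xs = ys"
    proof (rule nth_equalityI[OF len])
      fix i assume i: "i < length xs"
      have "xs ! i = ((cycle_of_list xs) ^^ i) (xs ! 0)" using cycle_of_list_pow[OF x(2) ne(1)] i by simp
      also have "\<dots> = ((cycle_of_list ys) ^^ i) (ys ! 0)" using eq h0 by simp
      also have "\<dots> = ys ! i" using cycle_of_list_pow[OF y(2) ne(2)] i len by simp
      finally show "xs ! i = ys ! i" .
    qed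
  qed
  show "cycle_of_list ` cyclists A a \<subseteq> cyc A a"
  proof
    fix \<sigma> assume "\<sigma> \<in> cycle_of_list ` cyclists A a"
    then obtain xs where xs: "set xs = A" "distinct xs" "hd xs = a" "\<sigma> = cycle_of_list xs"
      unfolding cyclists_def by auto
    have "xs \<noteq> []" using xs assms by auto
    then show "\<sigma> \<in> cyc A a"
      unfolding cyc_def using cycle_permutes[of xs] cycle_of_list_cycle[OF xs(2)] xs by auto
  qed
  show "finite (cyc A a)"
    using finite_permutations[OF assms(1)] unfolding cyc_def by (rule finite_subset[rotated]) auto
qed

lemma card_cyc_le_cyclists:
  assumes "finite A" "a \<in> A"
  shows "card (cyc A a) \<le> card (cyclists A a)"
proof (rule card_inj_on_le[where f = "\<lambda>\<sigma>. support \<sigma> a"])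
  have support_A: "permutation \<sigma>" "set (support \<sigma> a) = A" if "\<sigma> \<in> cyc A a" for \<sigma>
  proof -
    have ps: "\<sigma> permutes A" "cycle_of \<sigma> a = A" using that unfolding cyc_def by auto
    show pm: "permutation \<sigma>" using ps(1) assms(1) permutes_imp_permutation by blast
    show "set (support \<sigma> a) = A" using support_set[OF pm] ps(2) unfolding cycle_of_def by auto
  qed
  show "inj_on (\<lambda>\<sigma>. support \<sigma> a) (cyc A a)"
  proof (rule inj_onI)
    fix \<sigma> \<tau> assume s: "\<sigma> \<in> cyc A a" and t: "\<tau> \<in> cyc A a" and eq: "support \<sigma> a = support \<tau> a"
    have ps: "\<sigma> permutes A" and pt: "\<tau> permutes A" using s t unfolding cyc_def by auto
    note ss = support_A[OF s] and st = support_A[OF t]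
    show "\<sigma> = \<tau>"
    proof
      fix b show "\<sigma> b = \<tau> b"
      proof (cases "b \<in> A")
        case True
        then show ?thesis
          using cycle_restrict[OF ss(1), of b a] cycle_restrict[OF st(1), of b a] ss(2) st(2) eq by simp
      next
        case False
        then show ?thesis using ps pt unfolding permutes_def by auto
      qed
    qed
  qed
  show "(\<lambda>\<sigma>. support \<sigma> a) ` cyc A a \<subseteq> cyclists A a"
  proof
    fix xs assume "xs \<in> (\<lambda>\<sigma>. support \<sigma> a) ` cyc A a"
    then obtain \<sigma> where s: "\<sigma> \<in> cyc A a" "xs = support \<sigma> a" by auto
    have pm: "permutation \<sigma>" using support_A(1)[OF s(1)] .
    have "hd (support \<sigma> a) = a"
      using least_power_of_permutation(2)[OF pm] by (simp add: hd_map upt_conv_Cons)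
    then show "xs \<in> cyclists A a"
      unfolding cyclists_def s(2) using support_A(2)[OF s(1)] cycle_of_permutation[OF pm] by auto
  qed
  show "finite (cyclists A a)" by (rule card_cyclists(1)[OF assms])
qed

lemma card_cyc:
  assumes "finite A" "a \<in> A"
  shows "card (cyc A a) = fact (card A - 1)"
  using card_cyclists_le_cyc[OF assms] card_cyc_le_cyclists[OF assms] card_cyclists(2)[OF assms]
  by linarith

section \<open>Decomposing a permutation along the cycle of a point\<close>

definition wt :: "(nat \<Rightarrow> real) \<Rightarrow> nat set \<Rightarrow> (nat \<Rightarrow> nat) \<Rightarrow> real" where
  "wt \<theta> S \<sigma> = (\<Prod>C\<in>cycle_of \<sigma> ` S. \<theta> (card C))"

definition W :: "(nat \<Rightarrow> real) \<Rightarrow> nat set \<Rightarrow> real" where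
  "W \<theta> S = (\<Sum>\<sigma>\<in>{\<sigma>. \<sigma> permutes S}. wt \<theta> S \<sigma>)"

definition glue :: "nat set \<Rightarrow> (nat \<Rightarrow> nat) \<Rightarrow> (nat \<Rightarrow> nat) \<Rightarrow> nat \<Rightarrow> nat" where
  "glue A \<alpha> \<beta> = (\<lambda>x. if x \<in> A then \<alpha> x else \<beta> x)"

lemma glue_eq_comp:
  assumes "\<alpha> permutes A" "\<beta> permutes (S - A)"
  shows "glue A \<alpha> \<beta> = \<alpha> \<circ> \<beta>"
proof
  fix x show "glue A \<alpha> \<beta> x = (\<alpha> \<circ> \<beta>) x"
  proof (cases "x \<in> A")
    case True
    then have "\<beta> x = x" using assms(2) unfolding permutes_def by auto
    then show ?thesis using True unfolding glue_def by simp
  next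
    case False
    then have "\<beta> x \<notin> A"
      using permutes_in_image[OF assms(2)] assms(2) unfolding permutes_def by (cases "x \<in> S") auto
    then have "\<alpha> (\<beta> x) = \<beta> x" using assms(1) unfolding permutes_def by auto
    then show ?thesis using False unfolding glue_def by simp
  qed
qed

text \<open>Gluing a cyclic permutation of A (containing a) with a permutation of S - A
  gives a permutation of S whose cycles are A together with the cycles of the
  second factor; hence its weight factorises.\<close>
lemma glue_props:
  assumes S: "finite S" "A \<subseteq> S" "a \<in> A" and al: "\<alpha> \<in> cyc A a" and be: "\<beta> permutes (S - A)"
  shows "glue A \<alpha> \<beta> permutes S"
    and "cycle_of (glue A \<alpha> \<beta>) a = A"
    and "wt \<theta> S (glue A \<alpha> \<beta>) = \<theta> (card A) * wt \<theta> (S - A) \<beta>"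
proof -
  have ap: "\<alpha> permutes A" and ac: "cycle_of \<alpha> a = A" using al unfolding cyc_def by auto
  have fA: "finite A" using S finite_subset by blast
  show "glue A \<alpha> \<beta> permutes S"
    using permutes_compose[OF permutes_subset[OF be] permutes_subset[OF ap S(2)]]
      glue_eq_comp[OF ap be] by auto
  have inA: "cycle_of (glue A \<alpha> \<beta>) x = A" if x: "x \<in> A" for x
  proof -
    have "cycle_of (glue A \<alpha> \<beta>) x = cycle_of \<alpha> x"
      by (rule cycle_of_agree[OF x]) (auto simp: glue_def permutes_in_image[OF ap])
    also have "\<dots> = A" using cycle_of_same[OF ap fA, of x a] x ac by simp
    finally show ?thesis .
  qed
  then show "cycle_of (glue A \<alpha> \<beta>) a = A" using S(3) .
  have inB: "cycle_of (glue A \<alpha> \<beta>) x = cycle_of \<beta> x" if x: "x \<in> S - A" for x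
  proof (rule cycle_of_agree[OF x])
    fix y assume y: "y \<in> S - A"
    then show "glue A \<alpha> \<beta> y \<in> S - A" unfolding glue_def using permutes_in_image[OF be, of y] by simp
    show "glue A \<alpha> \<beta> y = \<beta> y" using y unfolding glue_def by simp
  qed
  have "cycle_of (glue A \<alpha> \<beta>) ` S = cycle_of (glue A \<alpha> \<beta>) ` A \<union> cycle_of (glue A \<alpha> \<beta>) ` (S - A)"
    using S(2) by (metis Diff_partition image_Un)
  also have "\<dots> = insert A (cycle_of \<beta> ` (S - A))" using inA inB S(3) by auto
  finally have img: "cycle_of (glue A \<alpha> \<beta>) ` S = insert A (cycle_of \<beta> ` (S - A))" .
  have "A \<notin> cycle_of \<beta> ` (S - A)" using cycle_of_self[of _ \<beta>] by blast
  then show "wt \<theta> S (glue A \<alpha> \<beta>) = \<theta> (card A) * wt \<theta> (S - A) \<beta>"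
    unfolding wt_def img using S(1) by (simp add: prod.insert)
qed

lemma split_at_cycle:
  assumes fS: "finite S" and sp: "\<sigma> permutes S" and sc: "cycle_of \<sigma> a = A"
  shows "perm_restrict \<sigma> A \<in> cyc A a"
    and "perm_restrict \<sigma> (S - A) permutes (S - A)"
    and "\<sigma> = glue A (perm_restrict \<sigma> A) (perm_restrict \<sigma> (S - A))"
proof -
  have cA: "cyclic_on \<sigma> A" using cyclic_on_cycle_of[OF sp fS, of a] sc by simp
  have "bij_betw (perm_restrict \<sigma> A) A A"
  proof (rule bij_betw_imageI)
    show "inj_on (perm_restrict \<sigma> A) A"
      using permutes_inj[OF sp] unfolding inj_on_def inj_def by (simp add: perm_restrict_simps)
    have "\<sigma> ` A \<subseteq> A" using cyclic_on_inI[OF cA] by auto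
    moreover have "A \<subseteq> \<sigma> ` A"
    proof
      fix y assume y: "y \<in> A"
      have "\<sigma> (inv \<sigma> y) = y" using permutes_inverses(1)[OF sp] by simp
      moreover then have "inv \<sigma> y \<in> A" using cyclic_on_f_in[OF sp cA] y by simp
      ultimately show "y \<in> \<sigma> ` A" by force
    qed
    ultimately show "perm_restrict \<sigma> A ` A = A" by (simp add: perm_restrict_simps)
  qed
  then have "perm_restrict \<sigma> A permutes A"
    by (rule bij_imp_permutes) (simp add: perm_restrict_simps)
  moreover have "cycle_of (perm_restrict \<sigma> A) a = cycle_of \<sigma> a"
    using sc cycle_of_self[of a \<sigma>] cyclic_on_inI[OF cA]
    by (intro cycle_of_agree[of a A]) (auto simp: perm_restrict_simps)
  then have "cycle_of (perm_restrict \<sigma> A) a = A" using sc by simp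
  ultimately show "perm_restrict \<sigma> A \<in> cyc A a" unfolding cyc_def by simp
  show "perm_restrict \<sigma> (S - A) permutes (S - A)"
    by (rule perm_restrict_diff_cyclic[OF sp cA])
  show "\<sigma> = glue A (perm_restrict \<sigma> A) (perm_restrict \<sigma> (S - A))"
    using sp unfolding glue_def perm_restrict_def permutes_def by (auto simp: fun_eq_iff)
qed

lemma fiber_eq:
  assumes S: "finite S" "A \<subseteq> S" "a \<in> A"
  shows "{\<sigma>. \<sigma> permutes S \<and> cycle_of \<sigma> a = A}
       = (\<lambda>(\<alpha>,\<beta>). glue A \<alpha> \<beta>) ` (cyc A a \<times> {\<beta>. \<beta> permutes (S - A)})"
proof (rule set_eqI, rule iffI)
  fix \<sigma> assume "\<sigma> \<in> {\<sigma>. \<sigma> permutes S \<and> cycle_of \<sigma> a = A}"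
  then have sp: "\<sigma> permutes S" and sc: "cycle_of \<sigma> a = A" by auto
  show "\<sigma> \<in> (\<lambda>(\<alpha>,\<beta>). glue A \<alpha> \<beta>) ` (cyc A a \<times> {\<beta>. \<beta> permutes (S - A)})"
    using split_at_cycle[OF S(1) sp sc] by force
next
  fix \<sigma> assume "\<sigma> \<in> (\<lambda>(\<alpha>,\<beta>). glue A \<alpha> \<beta>) ` (cyc A a \<times> {\<beta>. \<beta> permutes (S - A)})"
  then obtain \<alpha> \<beta> where "\<alpha> \<in> cyc A a" "\<beta> permutes (S - A)" "\<sigma> = glue A \<alpha> \<beta>" by auto
  then show "\<sigma> \<in> {\<sigma>. \<sigma> permutes S \<and> cycle_of \<sigma> a = A}" using glue_props[OF S] by auto
qed

lemma glue_inj: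
  "inj_on (\<lambda>(\<alpha>,\<beta>). glue A \<alpha> \<beta>) (cyc A a \<times> {\<beta>. \<beta> permutes (S - A)})"
proof (rule inj_onI, clarify)
  fix \<alpha> \<beta> \<alpha>' \<beta>'
  assume a: "\<alpha> \<in> cyc A a" "\<alpha>' \<in> cyc A a" and b: "\<beta> permutes (S - A)" "\<beta>' permutes (S - A)"
    and eq: "glue A \<alpha> \<beta> = glue A \<alpha>' \<beta>'"
  have ap: "\<alpha> permutes A" "\<alpha>' permutes A" using a unfolding cyc_def by auto
  show "\<alpha> = \<alpha>' \<and> \<beta> = \<beta>'"
  proof
    show "\<alpha> = \<alpha>'"
    proof
      fix x show "\<alpha> x = \<alpha>' x"
        using fun_cong[OF eq, of x] ap unfolding glue_def permutes_def by (cases "x \<in> A") auto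
    qed
    show "\<beta> = \<beta>'"
    proof
      fix x show "\<beta> x = \<beta>' x"
        using fun_cong[OF eq, of x] b unfolding glue_def permutes_def by (cases "x \<in> A") auto
    qed
  qed
qed

text \<open>First-cycle decomposition of the total weight: group the permutations of S
  by the cycle A containing a; each class contributes (card A - 1)! theta(card A) W(S - A).\<close>
lemma W_decomp:
  assumes S: "finite S" "a \<in> S"
  shows "W \<theta> S = (\<Sum>A\<in>{A. A \<subseteq> S \<and> a \<in> A}. fact (card A - 1) * \<theta> (card A) * W \<theta> (S - A))"
proof -
  let ?P = "{\<sigma>. \<sigma> permutes S}"
  let ?T = "{A. A \<subseteq> S \<and> a \<in> A}"
  have fP: "finite ?P" using finite_permutations[OF S(1)] by simp
  have fT: "finite ?T" using S(1) by (rule finite_subset[rotated, OF finite_Pow_iff[THEN iffD2]]) auto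
  have img: "(\<lambda>\<sigma>. cycle_of \<sigma> a) ` ?P \<subseteq> ?T" using cycle_of_sub S(2) cycle_of_self by blast
  have "W \<theta> S = (\<Sum>A\<in>?T. \<Sum>\<sigma>\<in>{\<sigma>\<in>?P. cycle_of \<sigma> a = A}. wt \<theta> S \<sigma>)"
    unfolding W_def using sum.group[OF fP fT img, of "wt \<theta> S"] by simp
  also have "\<dots> = (\<Sum>A\<in>?T. fact (card A - 1) * \<theta> (card A) * W \<theta> (S - A))"
  proof (rule sum.cong[OF refl])
    fix A assume A: "A \<in> ?T"
    then have As: "A \<subseteq> S" "a \<in> A" by auto
    have fA: "finite A" using S(1) As finite_subset by blast
    have e: "{\<sigma>\<in>?P. cycle_of \<sigma> a = A} = (\<lambda>(\<alpha>,\<beta>). glue A \<alpha> \<beta>) ` (cyc A a \<times> {\<beta>. \<beta> permutes (S - A)})"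
      using fiber_eq[OF S(1) As] by simp
    have "(\<Sum>\<sigma>\<in>{\<sigma>\<in>?P. cycle_of \<sigma> a = A}. wt \<theta> S \<sigma>)
        = (\<Sum>(\<alpha>,\<beta>)\<in>cyc A a \<times> {\<beta>. \<beta> permutes (S - A)}. wt \<theta> S (glue A \<alpha> \<beta>))"
      unfolding e by (subst sum.reindex[OF glue_inj]) (simp add: case_prod_unfold)
    also have "\<dots> = (\<Sum>(\<alpha>,\<beta>)\<in>cyc A a \<times> {\<beta>. \<beta> permutes (S - A)}. \<theta> (card A) * wt \<theta> (S - A) \<beta>)"
      by (rule sum.cong[OF refl]) (auto simp: glue_props[OF S(1) As])
    also have "\<dots> = (\<Sum>\<alpha>\<in>cyc A a. \<Sum>\<beta>\<in>{\<beta>. \<beta> permutes (S - A)}. \<theta> (card A) * wt \<theta> (S - A) \<beta>)"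
      by (rule sum.cartesian_product[symmetric])
    also have "\<dots> = of_nat (card (cyc A a)) * (\<theta> (card A) * W \<theta> (S - A))"
      by (simp add: W_def sum_distrib_left)
    also have "\<dots> = fact (card A - 1) * \<theta> (card A) * W \<theta> (S - A)"
      using card_cyc[OF fA As(2)] by simp
    finally show "(\<Sum>\<sigma>\<in>{\<sigma>\<in>?P. cycle_of \<sigma> a = A}. wt \<theta> S \<sigma>) = fact (card A - 1) * \<theta> (card A) * W \<theta> (S - A)" .
  qed
  finally show ?thesis .
qed



section \<open>The recursion for h\<close>

lemma sum_Pow_by_card:
  fixes G :: "nat \<Rightarrow> 'b::semiring_1"
  assumes "finite T"
  shows "(\<Sum>B\<in>Pow T. G (card B)) = (\<Sum>k\<le>card T. of_nat (card T choose k) * G k)"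
proof -
  have img: "card ` Pow T \<subseteq> {..card T}" using card_mono[OF assms] by auto
  have "(\<Sum>B\<in>Pow T. G (card B)) = (\<Sum>k\<le>card T. \<Sum>B\<in>{B \<in> Pow T. card B = k}. G (card B))"
    by (rule sum.group[OF finite_Pow_iff[THEN iffD2, OF assms] finite_atMost img, symmetric])
  also have "\<dots> = (\<Sum>k\<le>card T. of_nat (card T choose k) * G k)"
  proof (rule sum.cong[OF refl])
    fix k
    have "(\<Sum>B\<in>{B \<in> Pow T. card B = k}. G (card B)) = (\<Sum>B\<in>{B. B \<subseteq> T \<and> card B = k}. G k)"
      by (rule sum.cong) auto
    also have "\<dots> = of_nat (card T choose k) * G k"
      using n_subsets[OF assms, of k] by simp
    finally show "(\<Sum>B\<in>{B \<in> Pow T. card B = k}. G (card B)) = of_nat (card T choose k) * G k" .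
  qed
  finally show ?thesis .
qed

lemma sum_subsets_containing:
  fixes F :: "nat \<Rightarrow> 'b::semiring_1"
  assumes S: "finite S" "a \<in> S"
  shows "(\<Sum>A\<in>{A. A \<subseteq> S \<and> a \<in> A}. F (card A))
       = (\<Sum>k<card S. of_nat ((card S - 1) choose k) * F (Suc k))"
proof -
  have eq: "{A. A \<subseteq> S \<and> a \<in> A} = insert a ` Pow (S - {a})"
  proof (rule set_eqI, rule iffI)
    fix A assume "A \<in> {A. A \<subseteq> S \<and> a \<in> A}"
    then have "A = insert a (A - {a})" "A - {a} \<in> Pow (S - {a})" by auto
    then show "A \<in> insert a ` Pow (S - {a})" by blast
  qed (use S in auto)
  have inj: "inj_on (insert a) (Pow (S - {a}))" unfolding inj_on_def by blast
  have card_ins: "card (insert a B) = Suc (card B)" if "B \<in> Pow (S - {a})" for B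
  proof -
    have "finite B" "a \<notin> B" using that S(1) finite_subset by auto
    then show ?thesis by simp
  qed
  have "(\<Sum>A\<in>{A. A \<subseteq> S \<and> a \<in> A}. F (card A)) = (\<Sum>B\<in>Pow (S - {a}). F (Suc (card B)))"
    unfolding eq sum.reindex[OF inj] by (simp add: card_ins)
  also have "\<dots> = (\<Sum>k\<le>card S - 1. of_nat ((card S - 1) choose k) * F (Suc k))"
    using sum_Pow_by_card[of "S - {a}" "\<lambda>k. F (Suc k)"] S by simp
  also have "{..card S - 1} = {..<card S}" using S by (cases "card S") auto
  finally show ?thesis .
qed

text \<open>The total weight of an n-element set; it does not depend on the set (lemma
  W_card below), so it may be computed on the model set {0..<n}.\<close>
definition w :: "(nat \<Rightarrow> real) \<Rightarrow> nat \<Rightarrow> real" where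
  "w \<theta> n = W \<theta> {0..<n}"

lemma W_empty: "W \<theta> {} = 1"
  unfolding W_def wt_def by (simp add: permutes_empty)

text \<open>The first-cycle decomposition, with the weights of the smaller sets already
  known to depend on their cardinality only (the induction step for W_card).\<close>
lemma W_first_cycle:
  assumes IH: "\<And>T. finite T \<Longrightarrow> card T < n \<Longrightarrow> W \<theta> T = w \<theta> (card T)"
    and S: "finite S" "card S = n" "n \<ge> 1"
  shows "W \<theta> S = (\<Sum>k<n. of_nat ((n - 1) choose k) * (fact k * \<theta> (Suc k) * w \<theta> (n - Suc k)))"
proof -
  obtain a where a: "a \<in> S" using S by fastforce
  have "W \<theta> S = (\<Sum>A\<in>{A. A \<subseteq> S \<and> a \<in> A}. fact (card A - 1) * \<theta> (card A) * W \<theta> (S - A))"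
    by (rule W_decomp[OF S(1) a])
  also have "\<dots> = (\<Sum>A\<in>{A. A \<subseteq> S \<and> a \<in> A}. fact (card A - 1) * \<theta> (card A) * w \<theta> (n - card A))"
  proof (rule sum.cong[OF refl])
    fix A assume "A \<in> {A. A \<subseteq> S \<and> a \<in> A}"
    then have fA: "finite A" "A \<subseteq> S" "a \<in> A" using S(1) finite_subset by auto
    then have "card A \<ge> 1" by (metis One_nat_def Suc_leI card_gt_0_iff empty_iff)
    moreover have c: "card (S - A) = n - card A" using card_Diff_subset[OF fA(1,2)] S by simp
    ultimately have "W \<theta> (S - A) = w \<theta> (n - card A)" using IH[of "S - A"] S by simp
    then show "fact (card A - 1) * \<theta> (card A) * W \<theta> (S - A)
             = fact (card A - 1) * \<theta> (card A) * w \<theta> (n - card A)" by simp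
  qed
  also have "\<dots> = (\<Sum>k<card S. of_nat ((card S - 1) choose k)
                       * (fact (Suc k - 1) * \<theta> (Suc k) * w \<theta> (n - Suc k)))"
    by (rule sum_subsets_containing[OF S(1) a, where F = "\<lambda>j. fact (j - 1) * \<theta> j * w \<theta> (n - j)"])
  finally show ?thesis using S by simp
qed

lemma W_card:
  assumes "finite S"
  shows "W \<theta> S = w \<theta> (card S)"
  using assms
proof (induction "card S" arbitrary: S rule: less_induct)
  case less
  show ?case
  proof (cases "card S = 0")
    case True
    then have "S = {}" using less.prems by simp
    then show ?thesis unfolding w_def by simp
  next
    case False
    then have ne: "card S \<ge> 1" by simp
    have IH: "\<And>T. finite T \<Longrightarrow> card T < card S \<Longrightarrow> W \<theta> T = w \<theta> (card T)"
      using less.hyps by blast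
    have "W \<theta> S = (\<Sum>k<card S. of_nat ((card S - 1) choose k) * (fact k * \<theta> (Suc k) * w \<theta> (card S - Suc k)))"
      by (rule W_first_cycle[OF IH less.prems refl ne])
    also have "\<dots> = W \<theta> {0..<card S}"
      by (rule W_first_cycle[OF IH, symmetric]) (use ne in simp_all)
    finally show ?thesis unfolding w_def .
  qed
qed

lemma w_rec:
  assumes "n \<ge> 1"
  shows "w \<theta> n = (\<Sum>k<n. of_nat ((n - 1) choose k) * (fact k * \<theta> (Suc k) * w \<theta> (n - Suc k)))"
proof -
  have "W \<theta> {0..<n} = (\<Sum>k<n. of_nat ((n - 1) choose k) * (fact k * \<theta> (Suc k) * w \<theta> (n - Suc k)))"
    by (rule W_first_cycle) (use assms W_card in auto)
  then show ?thesis unfolding w_def[of \<theta> n] .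
qed

text \<open>The weight of the statement is the cycle weight: group the cycles by length.\<close>
lemma weight_eq_wt:
  assumes "\<sigma> permutes {1..n}"
  shows "weight \<theta> n \<sigma> = wt \<theta> {1..n} \<sigma>"
proof -
  let ?Cs = "cycle_of \<sigma> ` {1..n}"
  have img: "card ` ?Cs \<subseteq> {1..n}" using cycle_of_card[OF assms] by auto
  have "wt \<theta> {1..n} \<sigma> = (\<Prod>j\<in>{1..n}. \<Prod>C\<in>{C. C \<in> ?Cs \<and> card C = j}. \<theta> (card C))"
    unfolding wt_def by (rule prod.group[OF _ _ img, symmetric]) simp_all
  also have "\<dots> = (\<Prod>j\<in>{1..n}. \<theta> j ^ R n j \<sigma>)"
  proof (rule prod.cong[OF refl])
    fix j
    have "(\<Prod>C\<in>{C. C \<in> ?Cs \<and> card C = j}. \<theta> (card C)) = (\<Prod>C\<in>{C. C \<in> ?Cs \<and> card C = j}. \<theta> j)"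
      by (rule prod.cong) auto
    then show "(\<Prod>C\<in>{C. C \<in> ?Cs \<and> card C = j}. \<theta> (card C)) = \<theta> j ^ R n j \<sigma>"
      unfolding R_def cycles_of_def by simp
  qed
  finally show ?thesis unfolding weight_def by simp
qed

lemma h_eq_w: "h \<theta> n = w \<theta> n / fact n"
proof -
  have "(\<Sum>\<sigma>\<in>perms n. weight \<theta> n \<sigma>) = W \<theta> {1..n}"
    unfolding W_def perms_def by (rule sum.cong) (auto simp: weight_eq_wt)
  also have "\<dots> = w \<theta> n" using W_card[of "{1..n}"] by simp
  finally show ?thesis unfolding h_def by simp
qed

lemma h_0: "h \<theta> 0 = 1"
  unfolding h_eq_w w_def using W_empty by simp

text \<open>The factorials in the recursion for w cancel against n! in h = w/n!.\<close>
lemma binomial_fact_cancel: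
  assumes "k < n"
  shows "of_nat n * (of_nat ((n - 1) choose k) * (fact k * x * y)) / fact n
       = x * (y / fact (n - Suc k) :: real)"
proof -
  have "fact k * fact (n - 1 - k) * ((n - 1) choose k) = (fact (n - 1) :: nat)"
    using assms by (intro binomial_fact_lemma) auto
  then have "fact k * fact (n - Suc k) * real ((n - 1) choose k) = fact (n - 1)"
    by (metis diff_Suc_eq_diff_pred of_nat_fact of_nat_mult)
  moreover have "(fact n :: real) = of_nat n * fact (n - 1)"
    using assms by (metis Suc_diff_1 fact_Suc gr_implies_not0 not_gr_zero of_nat_mult of_nat_fact)
  moreover have "(fact (n - Suc k) :: real) > 0" "(fact k :: real) > 0" "n > 0" using assms by auto
  ultimately show ?thesis
    by (simp add: field_simps)
qed

lemma h_rec: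
  assumes "n \<ge> 1"
  shows "of_nat n * h \<theta> n = (\<Sum>j=1..n. \<theta> j * h \<theta> (n - j))"
proof -
  have "of_nat n * h \<theta> n
      = (\<Sum>k<n. of_nat n * (of_nat ((n - 1) choose k) * (fact k * \<theta> (Suc k) * w \<theta> (n - Suc k))) / fact n)"
    unfolding h_eq_w w_rec[OF assms] by (simp add: sum_distrib_left sum_divide_distrib)
  also have "\<dots> = (\<Sum>k<n. \<theta> (Suc k) * h \<theta> (n - Suc k))"
    by (rule sum.cong[OF refl]) (simp only: binomial_fact_cancel h_eq_w lessThan_iff)
  also have "\<dots> = (\<Sum>j=1..n. \<theta> j * h \<theta> (n - j))" by (rule sum_bounds_lt_plus1)
  finally show ?thesis .
qed

text \<open>With positive parameters all h(n) are positive: the term j = n of the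
  recursion is theta(n) h(0) = theta(n).\<close>
lemma h_pos:
  assumes pos: "\<And>n. n \<ge> 1 \<Longrightarrow> \<theta> n > 0"
  shows "h \<theta> n > 0"
proof (induction n rule: less_induct)
  case (less n)
  show ?case
  proof (cases "n = 0")
    case True
    then show ?thesis using h_0 by simp
  next
    case False
    then have n1: "n \<ge> 1" by simp
    have "(\<Sum>j=1..n. \<theta> j * h \<theta> (n - j)) > 0"
    proof (rule sum_pos2[where i = n])
      show "0 < \<theta> n * h \<theta> (n - n)" using pos[OF n1] h_0 by simp
      fix j assume "j \<in> {1..n}"
      then show "0 \<le> \<theta> j * h \<theta> (n - j)"
        using pos[of j] less.IH[of "n - j"] h_0 by (cases "j = n") (auto intro: less_imp_le)
    qed (use n1 in auto)
    then have "of_nat n * h \<theta> n > 0" using h_rec[OF n1] by simp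
    then show ?thesis by (simp add: zero_less_mult_iff)
  qed
qed

section \<open>An analytic renewal lemma\<close>

text \<open>If n c(n) = 1 + sum_{j<n} a(n,j) c(n-j) with nonnegative coefficients whose
  row sums s(n) tend to 0, then c is bounded (first), and hence n c(n) -> 1.\<close>
lemma renewal_step_bound:
  fixes a c :: "nat \<Rightarrow> real"
  assumes "\<And>j. j \<in> {1..n-1} \<Longrightarrow> 0 \<le> a j" "\<And>j. j \<in> {1..n-1} \<Longrightarrow> c (n - j) \<le> B"
  shows "(\<Sum>j=1..n-1. a j * c (n - j)) \<le> B * (\<Sum>j=1..n-1. a j)"
proof -
  have "(\<Sum>j=1..n-1. a j * c (n - j)) \<le> (\<Sum>j=1..n-1. a j * B)"
    using assms by (intro sum_mono mult_left_mono) auto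
  then show ?thesis by (simp add: sum_distrib_left mult.commute)
qed

lemma renewal_bounded:
  fixes c :: "nat \<Rightarrow> real" and a :: "nat \<Rightarrow> nat \<Rightarrow> real"
  assumes a_nonneg: "\<And>n j. j \<in> {1..n-1} \<Longrightarrow> 0 \<le> a n j"
    and rec: "\<And>n. n \<ge> 1 \<Longrightarrow> of_nat n * c n = 1 + (\<Sum>j=1..n-1. a n j * c (n - j))"
    and small: "(\<lambda>n. \<Sum>j=1..n-1. a n j) \<longlonglongrightarrow> 0"
  obtains M where "\<And>n. n \<ge> 1 \<Longrightarrow> c n \<le> M"
proof -
  define s where "s n = (\<Sum>j=1..n-1. a n j)" for n
  have s_nonneg: "s n \<ge> 0" for n unfolding s_def using a_nonneg by (intro sum_nonneg) auto
  obtain N0 where N0': "\<forall>n\<ge>N0. norm (s n - 0) < 1"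
    using LIMSEQ_D[OF small, of 1] unfolding s_def by auto
  have N0: "s n < 1" if "n \<ge> N0" for n
    using N0' that by auto
  define N where "N = max N0 1"
  define M where "M = max 1 (Max (c ` {1..N}))"
  have M1: "M \<ge> 1" unfolding M_def by simp
  have "c n \<le> M" if "n \<ge> 1" for n
    using that
  proof (induction n rule: less_induct)
    case (less n)
    show ?case
    proof (cases "n \<le> N")
      case True
      then have "c n \<le> Max (c ` {1..N})" using less.prems by (intro Max_ge) auto
      then show ?thesis unfolding M_def by simp
    next
      case False
      then have n2: "n \<ge> 2" and nN: "n \<ge> N0" unfolding N_def by auto
      have "(\<Sum>j=1..n-1. a n j * c (n - j)) \<le> M * s n"
        unfolding s_def using less.IH a_nonneg by (intro renewal_step_bound) auto
      then have "of_nat n * c n \<le> 1 + M * s n" using rec[of n] n2 by simp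
      also have "\<dots> \<le> 1 + M" using N0[OF nN] M1 s_nonneg[of n] by (simp add: mult_left_le)
      also have "\<dots> \<le> 2 * M" using M1 by simp
      also have "\<dots> \<le> of_nat n * M" using n2 M1 by (intro mult_right_mono) auto
      finally show ?thesis using n2 by simp
    qed
  qed
  then show ?thesis using that by blast
qed

lemma renewal_limit:
  fixes c :: "nat \<Rightarrow> real" and a :: "nat \<Rightarrow> nat \<Rightarrow> real"
  assumes a_nonneg: "\<And>n j. j \<in> {1..n-1} \<Longrightarrow> 0 \<le> a n j"
    and c_nonneg: "\<And>n. n \<ge> 1 \<Longrightarrow> 0 \<le> c n"
    and rec: "\<And>n. n \<ge> 1 \<Longrightarrow> of_nat n * c n = 1 + (\<Sum>j=1..n-1. a n j * c (n - j))"
    and small: "(\<lambda>n. \<Sum>j=1..n-1. a n j) \<longlonglongrightarrow> 0"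
  shows "(\<lambda>n. of_nat n * c n) \<longlonglongrightarrow> 1"
proof -
  obtain M where M: "\<And>n. n \<ge> 1 \<Longrightarrow> c n \<le> M"
    using renewal_bounded[OF a_nonneg rec small] by blast
  have lower: "1 \<le> of_nat n * c n" if "n \<ge> 1" for n
  proof -
    have "0 \<le> (\<Sum>j=1..n-1. a n j * c (n - j))"
      using a_nonneg c_nonneg by (intro sum_nonneg mult_nonneg_nonneg) auto
    then show ?thesis using rec[OF that] by simp
  qed
  have upper: "of_nat n * c n \<le> 1 + M * (\<Sum>j=1..n-1. a n j)" if "n \<ge> 1" for n
  proof -
    have "(\<Sum>j=1..n-1. a n j * c (n - j)) \<le> M * (\<Sum>j=1..n-1. a n j)"
      by (rule renewal_step_bound) (use a_nonneg M in auto)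
    then show ?thesis using rec[OF that] by linarith
  qed
  have "(\<lambda>n. 1 + M * (\<Sum>j=1..n-1. a n j)) \<longlonglongrightarrow> 1 + M * 0"
    by (intro tendsto_intros small)
  then have upper_lim: "(\<lambda>n. 1 + M * (\<Sum>j=1..n-1. a n j)) \<longlonglongrightarrow> 1" by simp
  show ?thesis
  proof (rule tendsto_sandwich[OF _ _ tendsto_const upper_lim])
    show "\<forall>\<^sub>F n in sequentially. 1 \<le> of_nat n * c n"
      using lower by (rule eventually_sequentiallyI)
    show "\<forall>\<^sub>F n in sequentially. of_nat n * c n \<le> 1 + M * (\<Sum>j=1..n-1. a n j)"
      using upper by (rule eventually_sequentiallyI)
  qed
qed

lemma h_renewal_rec:
  assumes pos: "\<And>n. n \<ge> 1 \<Longrightarrow> \<theta> n > 0" and n1: "n \<ge> 1"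
  shows "of_nat n * (h \<theta> n / \<theta> n)
       = 1 + (\<Sum>j=1..n-1. \<theta> j * \<theta> (n - j) / \<theta> n * (h \<theta> (n - j) / \<theta> (n - j)))"
proof -
  have tp: "\<theta> n > 0" using pos n1 by simp
  have split: "{1..n} = insert n {1..n-1}" using n1 by auto
  have "(\<Sum>j=1..n-1. \<theta> j * h \<theta> (n - j))
      = \<theta> n * (\<Sum>j=1..n-1. \<theta> j * \<theta> (n - j) / \<theta> n * (h \<theta> (n - j) / \<theta> (n - j)))"
    unfolding sum_distrib_left
  proof (rule sum.cong[OF refl])
    fix j assume "j \<in> {1..n-1}"
    then have "\<theta> (n - j) > 0" using pos[of "n - j"] by auto
    then show "\<theta> j * h \<theta> (n - j) = \<theta> n * (\<theta> j * \<theta> (n - j) / \<theta> n * (h \<theta> (n - j) / \<theta> (n - j)))"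
      using tp by (simp add: field_simps)
  qed
  moreover have "of_nat n * h \<theta> n = \<theta> n + (\<Sum>j=1..n-1. \<theta> j * h \<theta> (n - j))"
    unfolding h_rec[OF n1] split using h_0[of \<theta>] by (subst sum.insert) auto
  ultimately show ?thesis using tp by (simp add: field_simps)
qed

lemma normalized_h_limit:
  assumes pos: "\<And>n. n \<ge> 1 \<Longrightarrow> \<theta> n > 0"
    and lim: "(\<lambda>n. \<Sum>j=1..n-1. \<theta> j * \<theta> (n - j) / \<theta> n) \<longlonglongrightarrow> 0"
  shows "(\<lambda>n. of_nat n * (h \<theta> n / \<theta> n)) \<longlonglongrightarrow> 1"
proof (rule renewal_limit[OF _ _ h_renewal_rec[OF pos] lim])
  show "0 \<le> \<theta> j * \<theta> (n - j) / \<theta> n" if "j \<in> {1..n-1}" for n j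
    using that pos[of j] pos[of "n - j"] pos[of n] by (auto intro: less_imp_le)
  show "0 \<le> h \<theta> n / \<theta> n" if "n \<ge> 1" for n
    using h_pos[where \<theta>=\<theta>, OF pos, where n=n] pos[OF that] by (auto intro: less_imp_le)
qed

section \<open>The probability measure and the events\<close>

lemma finite_perms: "finite (perms n)"
  unfolding perms_def using finite_permutations[of "{1..n}"] by simp

lemma Pn_nonneg:
  assumes pos: "\<And>n. n \<ge> 1 \<Longrightarrow> \<theta> n > 0"
  shows "Pn \<theta> n \<sigma> \<ge> 0"
proof -
  have "weight \<theta> n \<sigma> \<ge> 0"
    unfolding weight_def using pos by (intro prod_nonneg zero_le_power) (auto intro: less_imp_le)
  then show ?thesis unfolding Pn_def using h_pos[where \<theta>=\<theta>, OF pos, where n=n] by simp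
qed

lemma Prob_mono:
  assumes pos: "\<And>n. n \<ge> 1 \<Longrightarrow> \<theta> n > 0"
    and imp: "\<And>\<sigma>. \<sigma> \<in> perms n \<Longrightarrow> E \<sigma> \<Longrightarrow> F \<sigma>"
  shows "Prob \<theta> n E \<le> Prob \<theta> n F"
  unfolding Prob_def
  by (rule sum_mono2) (use finite_perms imp Pn_nonneg[where \<theta>=\<theta>, OF pos] in auto)

lemma Prob_le1:
  assumes pos: "\<And>n. n \<ge> 1 \<Longrightarrow> \<theta> n > 0"
  shows "Prob \<theta> n E \<le> 1"
proof -
  have "Prob \<theta> n E \<le> Prob \<theta> n (\<lambda>_. True)"
    using Prob_mono[where \<theta>=\<theta>, OF pos, of n E "\<lambda>_. True"] by simp
  also have "\<dots> = (\<Sum>\<sigma>\<in>perms n. weight \<theta> n \<sigma>) / (fact n * h \<theta> n)"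
    unfolding Prob_def Pn_def by (simp add: sum_divide_distrib)
  also have "(\<Sum>\<sigma>\<in>perms n. weight \<theta> n \<sigma>) = fact n * h \<theta> n" unfolding h_def by simp
  also have "fact n * h \<theta> n / (fact n * h \<theta> n) = 1"
    using h_pos[where \<theta>=\<theta>, OF pos, where n=n] by simp
  finally show ?thesis .
qed

lemma L1_iff:
  assumes "\<sigma> permutes {1..n}" "n \<ge> 1"
  shows "L1 \<sigma> = n \<longleftrightarrow> cycle_of \<sigma> 1 = {1..n}"
proof
  have sub: "cycle_of \<sigma> 1 \<subseteq> {1..n}" by (rule cycle_of_sub[OF assms(1)]) (use assms in simp)
  assume "L1 \<sigma> = n"
  then have "card (cycle_of \<sigma> 1) = card {1..n}" unfolding L1_def by simp
  then show "cycle_of \<sigma> 1 = {1..n}" using card_subset_eq[OF _ sub] by simp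
next
  assume "cycle_of \<sigma> 1 = {1..n}"
  then show "L1 \<sigma> = n" unfolding L1_def by simp
qed

lemma full_cycle_image:
  assumes "\<sigma> permutes {1..n}" "n \<ge> 1" "cycle_of \<sigma> 1 = {1..n}"
  shows "cycle_of \<sigma> ` {1..n} = {{1..n}}"
proof -
  have "\<And>x. x \<in> {1..n} \<Longrightarrow> cycle_of \<sigma> x = {1..n}"
    using cycle_of_same[OF assms(1) finite_atLeastAtMost] assms(3) by metis
  moreover have "{1..n} \<noteq> ({} :: nat set)" using assms(2) by simp
  ultimately show ?thesis by auto
qed

lemma K_iff:
  assumes "\<sigma> permutes {1..n}" "n \<ge> 1"
  shows "K n \<sigma> = 1 \<longleftrightarrow> L1 \<sigma> = n"
proof
  assume "K n \<sigma> = 1"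
  then obtain C where C: "cycle_of \<sigma> ` {1..n} = {C}" unfolding K_def cycles_of_def using card_1_singletonE by blast
  have "cycle_of \<sigma> 1 = C" using C assms(2) by auto
  have "{1..n} \<subseteq> cycle_of \<sigma> 1"
  proof
    fix x assume "x \<in> {1..n}"
    then have "cycle_of \<sigma> x = C" using C by auto
    then show "x \<in> cycle_of \<sigma> 1" using cycle_of_self[of x \<sigma>] \<open>cycle_of \<sigma> 1 = C\<close> by simp
  qed
  moreover have "cycle_of \<sigma> 1 \<subseteq> {1..n}" by (rule cycle_of_sub[OF assms(1)]) (use assms in simp)
  ultimately show "L1 \<sigma> = n" using L1_iff[OF assms] by blast
next
  assume "L1 \<sigma> = n"
  then have "cycle_of \<sigma> 1 = {1..n}" using L1_iff[OF assms] by simp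
  then show "K n \<sigma> = 1" unfolding K_def cycles_of_def using full_cycle_image[OF assms] by simp
qed

lemma R_zero:
  assumes "\<sigma> permutes {1..n}" "n \<ge> 1" "L1 \<sigma> = n" "j \<noteq> n"
  shows "R n j \<sigma> = 0"
proof -
  have "cycle_of \<sigma> 1 = {1..n}" using L1_iff[OF assms(1,2)] assms(3) by simp
  then have "cycles_of n \<sigma> = {{1..n}}" unfolding cycles_of_def using full_cycle_image[OF assms(1,2)] by simp
  then show ?thesis unfolding R_def using assms(4) by simp
qed

text \<open>The permutations with L_1 = n are the cyclic ones; there are (n-1)! of them,
  each of weight theta(n), so P_n(L_1 = n) = theta(n)/(n h(n)).\<close>
lemma Prob_L1:
  assumes pos: "\<And>n. n \<ge> 1 \<Longrightarrow> \<theta> n > 0" and n1: "n \<ge> 1"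
  shows "Prob \<theta> n (\<lambda>\<sigma>. L1 \<sigma> = n) = \<theta> n / (of_nat n * h \<theta> n)"
proof -
  have seteq: "{\<sigma> \<in> perms n. L1 \<sigma> = n} = cyc {1..n} 1"
    unfolding perms_def cyc_def using L1_iff[OF _ n1] by auto
  have Pn_cyclic: "Pn \<theta> n \<sigma> = \<theta> n / (fact n * h \<theta> n)" if s: "\<sigma> \<in> cyc {1..n} 1" for \<sigma>
  proof -
    have sp: "\<sigma> permutes {1..n}" "cycle_of \<sigma> 1 = {1..n}" using s unfolding cyc_def by auto
    have "weight \<theta> n \<sigma> = wt \<theta> {1..n} \<sigma>" by (rule weight_eq_wt[OF sp(1)])
    also have "\<dots> = \<theta> n" unfolding wt_def full_cycle_image[OF sp(1) n1 sp(2)] by simp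
    finally show ?thesis unfolding Pn_def by simp
  qed
  have "Prob \<theta> n (\<lambda>\<sigma>. L1 \<sigma> = n) = (\<Sum>\<sigma>\<in>cyc {1..n} 1. \<theta> n / (fact n * h \<theta> n))"
    unfolding Prob_def seteq using Pn_cyclic by simp
  also have "\<dots> = of_nat (fact (n - 1)) * \<theta> n / (fact n * h \<theta> n)"
    using card_cyc[of "{1..n}" 1] n1 by simp
  also have "(fact n :: real) = of_nat n * fact (n - 1)"
    using n1 by (metis Suc_diff_1 fact_Suc le_simps(3) of_nat_mult of_nat_fact One_nat_def)
  finally show ?thesis using h_pos[where \<theta>=\<theta>, OF pos, where n=n] n1 by (simp add: field_simps)
qed

lemma Prob_L1_limit:
  assumes pos: "\<And>n. n \<ge> 1 \<Longrightarrow> \<theta> n > 0"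
    and lim: "(\<lambda>n. \<Sum>j=1..n-1. \<theta> j * \<theta> (n - j) / \<theta> n) \<longlonglongrightarrow> 0"
  shows "(\<lambda>n. Prob \<theta> n (\<lambda>\<sigma>. L1 \<sigma> = n)) \<longlonglongrightarrow> 1"
proof -
  have "(\<lambda>n. inverse (of_nat n * (h \<theta> n / \<theta> n))) \<longlonglongrightarrow> inverse 1"
    using tendsto_inverse[OF normalized_h_limit[OF pos lim]] by simp
  moreover have "\<forall>\<^sub>F n in sequentially. inverse (of_nat n * (h \<theta> n / \<theta> n)) = Prob \<theta> n (\<lambda>\<sigma>. L1 \<sigma> = n)"
  proof (rule eventually_sequentiallyI[of 1])
    fix n :: nat assume n: "n \<ge> 1"
    have "\<theta> n > 0" "h \<theta> n > 0" using pos[OF n] h_pos[where \<theta>=\<theta>, OF pos] by auto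
    moreover have "Prob \<theta> n (\<lambda>\<sigma>. L1 \<sigma> = n) = \<theta> n / (of_nat n * h \<theta> n)"
      by (rule Prob_L1[OF pos n])
    ultimately show "inverse (of_nat n * (h \<theta> n / \<theta> n)) = Prob \<theta> n (\<lambda>\<sigma>. L1 \<sigma> = n)"
      using n by (simp add: field_split_simps)
  qed
  ultimately show ?thesis using Lim_transform_eventually by fastforce
qed

lemma Prob_K_eq_L1:
  assumes "n \<ge> 1"
  shows "Prob \<theta> n (\<lambda>\<sigma>. K n \<sigma> = 1) = Prob \<theta> n (\<lambda>\<sigma>. L1 \<sigma> = n)"
proof -
  have "{\<sigma> \<in> perms n. K n \<sigma> = 1} = {\<sigma> \<in> perms n. L1 \<sigma> = n}"
    unfolding perms_def using K_iff[OF _ assms] by auto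
  then show ?thesis unfolding Prob_def by simp
qed

lemma Prob_L1_le_R0:
  assumes pos: "\<And>n. n \<ge> 1 \<Longrightarrow> \<theta> n > 0" and "j < n"
  shows "Prob \<theta> n (\<lambda>\<sigma>. L1 \<sigma> = n) \<le> Prob \<theta> n (\<lambda>\<sigma>. R n j \<sigma> = 0)"
proof (rule Prob_mono[OF pos])
  fix \<sigma> assume "\<sigma> \<in> perms n" "L1 \<sigma> = n"
  then show "R n j \<sigma> = 0" using R_zero[of \<sigma> n j] assms(2) unfolding perms_def by simp
qed

theorem theorem3p1:
  fixes \<theta> :: "nat \<Rightarrow> real"
  assumes pos: "\<And>n. n \<ge> 1 \<Longrightarrow> \<theta> n > 0"
    and lim: "(\<lambda>n. \<Sum>j=1..n-1. \<theta> j * \<theta> (n - j) / \<theta> n) \<longlonglongrightarrow> 0"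
  shows "(\<lambda>n. Prob \<theta> n (\<lambda>\<sigma>. L1 \<sigma> = n)) \<longlonglongrightarrow> 1
     \<and> (\<lambda>n. Prob \<theta> n (\<lambda>\<sigma>. K n \<sigma> = 1)) \<longlonglongrightarrow> 1
     \<and> (\<forall>j. (\<lambda>n. Prob \<theta> n (\<lambda>\<sigma>. R n j \<sigma> = 0)) \<longlonglongrightarrow> 1)"
proof (intro conjI allI)
  show L: "(\<lambda>n. Prob \<theta> n (\<lambda>\<sigma>. L1 \<sigma> = n)) \<longlonglongrightarrow> 1" by (rule Prob_L1_limit[OF pos lim])
  have "\<forall>\<^sub>F n in sequentially. Prob \<theta> n (\<lambda>\<sigma>. L1 \<sigma> = n) = Prob \<theta> n (\<lambda>\<sigma>. K n \<sigma> = 1)"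
    using Prob_K_eq_L1 by (intro eventually_sequentiallyI[of 1]) simp
  then show "(\<lambda>n. Prob \<theta> n (\<lambda>\<sigma>. K n \<sigma> = 1)) \<longlonglongrightarrow> 1" by (rule Lim_transform_eventually[OF L])
  fix j
  have "\<forall>\<^sub>F n in sequentially. Prob \<theta> n (\<lambda>\<sigma>. L1 \<sigma> = n) \<le> Prob \<theta> n (\<lambda>\<sigma>. R n j \<sigma> = 0)"
    using Prob_L1_le_R0[OF pos] by (intro eventually_sequentiallyI[of "Suc j"]) simp
  moreover have "\<forall>\<^sub>F n in sequentially. Prob \<theta> n (\<lambda>\<sigma>. R n j \<sigma> = 0) \<le> 1"
    using Prob_le1[OF pos] by simp
  ultimately show "(\<lambda>n. Prob \<theta> n (\<lambda>\<sigma>. R n j \<sigma> = 0)) \<longlonglongrightarrow> 1"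
    by (rule tendsto_sandwich[OF _ _ L tendsto_const])
qed

end
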